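(* Let $A$ and $B$ be commutative associative unital algebras over $\mathbb{C}$ or $\mathbb{R}$, let $\mathbf{f}_1,\dots,\mathbf{f}_r\colon A\to B$ be unital algebra homomorphisms, and let $n_1,\dots,n_r\in\mathbb{Z}$. Put $\mathbf{f}=\sum_{\alpha}n_\alpha\mathbf{f}_\alpha$, $p=\sum_{n_\alpha>0}n_\alpha$ and $q=-\sum_{n_\alpha<0}n_\alpha$. Then $\mathbf{f}$ is a $p|q$-homomorphism, with $\mathbf{f}(1)=\sum_\alpha n_\alpha=p-q$.
   Context: For a linear map $\mathbf{f}\colon A\to B$, its characteristic function is the formal power series $R(\mathbf{f},a,z)=\exp\bigl(\mathbf{f}(\ln(1+az))\bigr)\in B[[z]]$, where $\ln(1+az)=\sum_{k\ge1}(-1)^{k-1}a^kz^k/k$ and $\mathbf{f}$ is applied coefficientwise. A linear map $\mathbf{f}$ is called a $p|q$-homomorphism if for every $a\in A$, $R(\mathbf{f},a,z)$ is a rational function of $z$ representable as a ratio $P_a(z)/Q_a(z)$ of polynomials $P_a,Q_a\in B[z]$ of degrees $p$ and $q$ respectively, with $Q_a(0)=1$ (the ratio understood as a formal power series). *)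

theory Defs
  imports Complex_Main "HOL-Computational_Algebra.Polynomial_FPS"
begin

text \<open>Algebras over R (complex algebras are in particular real algebras).
  Coefficientwise application of a map to a formal power series.\<close>
definition fps_map_coeffs :: "('a \<Rightarrow> 'b) \<Rightarrow> 'a fps \<Rightarrow> 'b fps" where
  "fps_map_coeffs f g = Abs_fps (\<lambda>k. f (fps_nth g k))"

definition fps_ln1p :: "'a::real_algebra_1 \<Rightarrow> 'a fps" where
  "fps_ln1p a = Abs_fps (\<lambda>k. if k = 0 then 0
                             else ((-1) ^ (k - 1) / real k) *\<^sub>R a ^ k)"

text \<open>Exponential of a formal power series (meant for series with zero
  constant term, where the defining sum is finite in each coefficient):
  exp g = sum_k g^k / k!.\<close>
definition fps_Exp :: "'b::{comm_ring_1,real_algebra_1} fps \<Rightarrow> 'b fps" where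
  "fps_Exp g = Abs_fps (\<lambda>n. \<Sum>k\<le>n. (1 / fact k) *\<^sub>R (fps_nth (g ^ k) n))"

definition char_fun :: "('a::real_algebra_1 \<Rightarrow> 'b::{comm_ring_1,real_algebra_1}) \<Rightarrow> 'a \<Rightarrow> 'b fps" where
  "char_fun f a = fps_Exp (fps_map_coeffs f (fps_ln1p a))"

text \<open>p|q-homomorphism: linear map such that every R(f,a,z) equals P_a/Q_a with
  deg P_a <= p, deg Q_a <= q, Q_a(0) = 1 (ratio as power series, i.e. R * Q = P).\<close>
definition pq_hom :: "nat \<Rightarrow> nat \<Rightarrow> ('a::real_algebra_1 \<Rightarrow> 'b::{comm_ring_1,real_algebra_1}) \<Rightarrow> bool" where
  "pq_hom p q f \<longleftrightarrow> linear f \<and>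
     (\<forall>a. \<exists>P Q :: 'b poly. degree P \<le> p \<and> degree Q \<le> q \<and> coeff Q 0 = 1 \<and>
            char_fun f a * fps_of_poly Q = fps_of_poly P)"

definition unital_alg_hom :: "('a::real_algebra_1 \<Rightarrow> 'b::real_algebra_1) \<Rightarrow> bool" where
  "unital_alg_hom f \<longleftrightarrow> linear f \<and> (\<forall>x y. f (x * y) = f x * f y) \<and> f 1 = 1"

end

theory Submission
  imports Defs
begin

(* Since each f_alpha is a unital ring homomorphism, it commutes with the series ln(1 + a z), so
   f(ln(1 + a z)) = sum_alpha n_alpha ln(1 + f_alpha(a) z).  The exponential turns this sum into
   the product of the (1 + f_alpha(a) z)^n_alpha; clearing the negative powers exhibits R(f,a,z)
   as a quotient of products of p, resp. q, linear factors with constant term 1.  The two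
   identities exp(g + h) = exp g exp h and exp(ln(1 + b z)) = 1 + b z are proved by showing that
   both sides solve the same linear differential equation Y' = h Y, whose solutions are
   determined by their constant term. *)

unbundle fps_syntax

definition fps_Exp_partial :: "'b::{comm_ring_1,real_algebra_1} fps \<Rightarrow> nat \<Rightarrow> 'b fps" where
  "fps_Exp_partial g N = (\<Sum>k\<le>N. fps_const (of_real (inverse (fact k))) * g ^ k)"

lemma fps_Exp_nth_0 [simp]: "fps_Exp g $ 0 = 1"
  by (simp add: fps_Exp_def)

lemma fps_Exp_nth_eq_partial:
  fixes g :: "'b::{comm_ring_1,real_algebra_1} fps"
  assumes "g $ 0 = 0" and "n \<le> N"
  shows "fps_Exp g $ n = fps_Exp_partial g N $ n"
proof -
  have "fps_Exp_partial g N $ n = (\<Sum>k\<le>N. of_real (inverse (fact k)) * (g ^ k $ n))"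
    by (simp add: fps_Exp_partial_def fps_sum_nth)
  also have "\<dots> = (\<Sum>k\<le>n. of_real (inverse (fact k)) * (g ^ k $ n))"
    using startsby_zero_power_prefix[OF \<open>g $ 0 = 0\<close>] \<open>n \<le> N\<close>
    by (intro sum.mono_neutral_right) auto
  also have "\<dots> = fps_Exp g $ n"
    by (simp add: fps_Exp_def scaleR_conv_of_real divide_inverse)
  finally show ?thesis ..
qed

lemma fps_deriv_Exp_partial:
  fixes g :: "'b::{comm_ring_1,real_algebra_1} fps"
  shows "fps_deriv (fps_Exp_partial g (Suc N)) = fps_deriv g * fps_Exp_partial g N"
proof -
  have coeff: "of_real (inverse (fact (Suc k))) * (of_nat (Suc k) :: 'b) = of_real (inverse (fact k))"
    for k
  proof -
    have "inverse (fact (Suc k)) * real (Suc k) = inverse (fact k)"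
      by (simp add: fact_Suc field_simps del: of_nat_Suc)
    then show ?thesis
      by (metis of_real_mult of_real_of_nat_eq)
  qed
  have "fps_deriv (fps_Exp_partial g (Suc N)) =
      (\<Sum>k\<le>Suc N. fps_const (of_real (inverse (fact k))) *
                   (fps_const (of_nat k) * fps_deriv g * g ^ (k - 1)))"
    by (simp only: fps_Exp_partial_def fps_deriv_sum fps_deriv_mult_const_left fps_deriv_power)
  also have "\<dots> = (\<Sum>k\<le>N. fps_const (of_real (inverse (fact (Suc k)))) *
                           (fps_const (of_nat (Suc k)) * fps_deriv g * g ^ k))"
    by (subst sum.atMost_Suc_shift) (simp del: sum.atMost_Suc of_nat_Suc fact_Suc)
  also have "\<dots> = (\<Sum>k\<le>N. fps_deriv g *
      (fps_const (of_real (inverse (fact (Suc k))) * of_nat (Suc k)) * g ^ k))"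
    by (intro sum.cong refl)
      (simp add: algebra_simps del: of_nat_Suc fps_const_mult flip: fps_const_mult)
  also have "\<dots> = fps_deriv g * fps_Exp_partial g N"
    by (simp only: coeff fps_Exp_partial_def sum_distrib_left)
  finally show ?thesis .
qed

lemma fps_deriv_Exp:
  fixes g :: "'b::{comm_ring_1,real_algebra_1} fps"
  assumes "g $ 0 = 0"
  shows "fps_deriv (fps_Exp g) = fps_deriv g * fps_Exp g"
proof (rule fps_ext)
  fix n
  have "fps_deriv (fps_Exp g) $ n = fps_deriv (fps_Exp_partial g (Suc n)) $ n"
    using fps_Exp_nth_eq_partial[OF assms, of "Suc n" "Suc n"] by simp
  also have "\<dots> = (fps_deriv g * fps_Exp_partial g n) $ n"
    by (simp add: fps_deriv_Exp_partial)
  also have "\<dots> = (fps_deriv g * fps_Exp g) $ n"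
    unfolding fps_mult_nth by (intro sum.cong refl) (simp add: fps_Exp_nth_eq_partial[OF assms, of _ n])
  finally show "fps_deriv (fps_Exp g) $ n = (fps_deriv g * fps_Exp g) $ n" .
qed

(* (n + 1) Y_(n+1) = (h Y)_n determines Y from Y_0; dividing by n + 1 is where the real
   scalars are needed. *)
lemma fps_linear_ode_unique:
  fixes Y Z h :: "'b::{comm_ring_1,real_algebra_1} fps"
  assumes "fps_deriv Y = h * Y" and "fps_deriv Z = h * Z" and "Y $ 0 = Z $ 0"
  shows "Y = Z"
proof (rule fps_ext)
  fix n show "Y $ n = Z $ n"
  proof (induction n rule: less_induct)
    case (less n)
    show ?case
    proof (cases n)
      case 0
      then show ?thesis using assms(3) by simp
    next
      case (Suc m)
      have "real (Suc m) *\<^sub>R (Y $ Suc m) = fps_deriv Y $ m"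
        by (simp add: scaleR_conv_of_real)
      also have "\<dots> = fps_deriv Z $ m"
        unfolding assms(1,2) fps_mult_nth using less Suc by (intro sum.cong refl) auto
      also have "\<dots> = real (Suc m) *\<^sub>R (Z $ Suc m)"
        by (simp add: scaleR_conv_of_real)
      finally show ?thesis
        using Suc by (simp del: of_nat_Suc)
    qed
  qed
qed

lemma fps_Exp_add:
  fixes g h :: "'b::{comm_ring_1,real_algebra_1} fps"
  assumes "g $ 0 = 0" and "h $ 0 = 0"
  shows "fps_Exp (g + h) = fps_Exp g * fps_Exp h"
  by (rule fps_linear_ode_unique[where h = "fps_deriv (g + h)"])
    (use assms in \<open>simp_all add: fps_deriv_Exp algebra_simps\<close>)

lemma fps_Exp_zero [simp]: "fps_Exp (0 :: 'b::{comm_ring_1,real_algebra_1} fps) = 1"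
  by (rule fps_linear_ode_unique[where h = 0]) (simp_all add: fps_deriv_Exp)

lemma fps_Exp_sum:
  fixes G :: "'i \<Rightarrow> 'b::{comm_ring_1,real_algebra_1} fps"
  assumes "\<And>i. i \<in> A \<Longrightarrow> G i $ 0 = 0"
  shows "fps_Exp (\<Sum>i\<in>A. G i) = (\<Prod>i\<in>A. fps_Exp (G i))"
  using assms
proof (induction A rule: infinite_finite_induct)
  case (insert i A)
  have "(\<Sum>j\<in>A. G j) $ 0 = 0"
    using insert.prems by (simp add: fps_sum_nth)
  with insert show ?case
    by (simp add: fps_Exp_add)
qed simp_all

lemma fps_Exp_of_nat_mult:
  fixes h :: "'b::{comm_ring_1,real_algebra_1} fps"
  assumes "h $ 0 = 0"
  shows "fps_Exp (fps_const (of_nat m) * h) = fps_Exp h ^ m"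
proof (induction m)
  case (Suc m)
  have "fps_const (of_nat (Suc m)) * h = h + fps_const (of_nat m) * h"
    unfolding fps_of_nat by (simp add: algebra_simps)
  then show ?case
    using Suc assms by (simp add: fps_Exp_add)
qed simp

lemma fps_Exp_of_int_mult:
  fixes h :: "'b::{comm_ring_1,real_algebra_1} fps"
  assumes "h $ 0 = 0"
  shows "fps_Exp (fps_const (of_int n) * h) * fps_Exp h ^ nat (- n) = fps_Exp h ^ nat n"
proof (cases "n \<ge> 0")
  case True
  then obtain m where "n = int m"
    using nonneg_int_cases by blast
  then show ?thesis
    using assms by (simp add: fps_Exp_of_nat_mult)
next
  case False
  define H where "H = fps_const (of_nat (nat (- n))) * h"
  have "fps_const (of_int n) * h = - H"
    using False by (simp add: H_def flip: fps_const_neg)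
  moreover have "fps_Exp h ^ nat (- n) = fps_Exp H"
    using assms by (simp add: H_def fps_Exp_of_nat_mult)
  ultimately have "fps_Exp (fps_const (of_int n) * h) * fps_Exp h ^ nat (- n)
      = fps_Exp (- H) * fps_Exp H"
    by simp
  also have "\<dots> = fps_Exp (- H + H)"
    using assms by (intro fps_Exp_add[symmetric]) (simp_all add: H_def)
  finally show ?thesis
    using False by simp
qed

lemma fps_ln1p_nth_0 [simp]: "fps_ln1p b $ 0 = 0"
  by (simp add: fps_ln1p_def)

lemma fps_deriv_ln1p:
  fixes b :: "'b::{comm_ring_1,real_algebra_1}"
  shows "fps_deriv (fps_ln1p b) = Abs_fps (\<lambda>n. (-1) ^ n * b ^ Suc n)"
proof (rule fps_ext)
  fix n
  have "of_nat (Suc n) * (((-1) ^ n / real (Suc n)) *\<^sub>R b ^ Suc n)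
      = (real (Suc n) * ((-1) ^ n / real (Suc n))) *\<^sub>R b ^ Suc n"
    by (simp only: scaleR_conv_of_real of_real_mult of_real_of_nat_eq mult.assoc)
  also have "\<dots> = (-1) ^ n * b ^ Suc n"
    by (simp add: scaleR_conv_of_real del: of_nat_Suc)
  finally show "fps_deriv (fps_ln1p b) $ n = Abs_fps (\<lambda>n. (-1) ^ n * b ^ Suc n) $ n"
    by (simp add: fps_ln1p_def del: of_nat_Suc)
qed

lemma fps_Exp_ln1p:
  fixes b :: "'b::{comm_ring_1,real_algebra_1}"
  shows "fps_Exp (fps_ln1p b) = 1 + fps_const b * fps_X"
proof (rule fps_linear_ode_unique[where h = "fps_deriv (fps_ln1p b)"])
  have "fps_deriv (fps_ln1p b) * (1 + fps_const b * fps_X) = fps_const b"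
  proof (rule fps_ext)
    fix n
    show "(fps_deriv (fps_ln1p b) * (1 + fps_const b * fps_X)) $ n = fps_const b $ n"
      by (cases n) (simp_all add: fps_deriv_ln1p algebra_simps fps_X_mult_nth)
  qed
  then show "fps_deriv (1 + fps_const b * fps_X) = fps_deriv (fps_ln1p b) * (1 + fps_const b * fps_X)"
    by simp
qed (simp_all add: fps_deriv_Exp)

lemma unital_alg_hom_power: "unital_alg_hom F \<Longrightarrow> F (x ^ k) = F x ^ k"
  by (induction k) (auto simp: unital_alg_hom_def)

lemma fps_map_coeffs_ln1p:
  assumes "unital_alg_hom F"
  shows "fps_map_coeffs F (fps_ln1p a) = fps_ln1p (F a)"
proof -
  have lin: "linear F"
    using assms by (simp add: unital_alg_hom_def)
  show ?thesis
    using lin linear_0[OF lin] assms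
    by (auto intro!: arg_cong[where f = Abs_fps]
        simp: fps_map_coeffs_def fps_ln1p_def linear_iff unital_alg_hom_power)
qed

lemma char_fun_int_combination:
  fixes F :: "'i \<Rightarrow> 'a::real_algebra_1 \<Rightarrow> 'b::{comm_ring_1,real_algebra_1}"
  assumes hom: "\<And>\<alpha>. \<alpha> \<in> A \<Longrightarrow> unital_alg_hom (F \<alpha>)"
  shows "char_fun (\<lambda>x. \<Sum>\<alpha>\<in>A. of_int (n \<alpha>) * F \<alpha> x) a
           * fps_of_poly (\<Prod>\<alpha>\<in>A. [:1, F \<alpha> a:] ^ nat (- n \<alpha>))
         = fps_of_poly (\<Prod>\<alpha>\<in>A. [:1, F \<alpha> a:] ^ nat (n \<alpha>))"
proof -
  define G where "G \<alpha> = fps_const (of_int (n \<alpha>)) * fps_ln1p (F \<alpha> a)" for \<alpha>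
  have linear_factor: "fps_of_poly [:1, F \<alpha> a:] = fps_Exp (fps_ln1p (F \<alpha> a))" for \<alpha>
    by (simp add: fps_Exp_ln1p fps_of_poly_pCons mult.commute)
  have "fps_map_coeffs (\<lambda>x. \<Sum>\<alpha>\<in>A. of_int (n \<alpha>) * F \<alpha> x) (fps_ln1p a) = (\<Sum>\<alpha>\<in>A. G \<alpha>)"
  proof (rule fps_ext)
    fix k
    have "fps_map_coeffs (\<lambda>x. \<Sum>\<alpha>\<in>A. of_int (n \<alpha>) * F \<alpha> x) (fps_ln1p a) $ k
        = (\<Sum>\<alpha>\<in>A. of_int (n \<alpha>) * fps_map_coeffs (F \<alpha>) (fps_ln1p a) $ k)"
      by (simp add: fps_map_coeffs_def)
    also have "\<dots> = (\<Sum>\<alpha>\<in>A. G \<alpha> $ k)"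
      using hom by (intro sum.cong refl) (simp add: fps_map_coeffs_ln1p G_def)
    finally show "fps_map_coeffs (\<lambda>x. \<Sum>\<alpha>\<in>A. of_int (n \<alpha>) * F \<alpha> x) (fps_ln1p a) $ k
        = (\<Sum>\<alpha>\<in>A. G \<alpha>) $ k"
      by (simp add: fps_sum_nth)
  qed
  then have "char_fun (\<lambda>x. \<Sum>\<alpha>\<in>A. of_int (n \<alpha>) * F \<alpha> x) a
             * fps_of_poly (\<Prod>\<alpha>\<in>A. [:1, F \<alpha> a:] ^ nat (- n \<alpha>))
           = (\<Prod>\<alpha>\<in>A. fps_Exp (G \<alpha>) * fps_Exp (fps_ln1p (F \<alpha> a)) ^ nat (- n \<alpha>))"
    by (simp add: char_fun_def fps_Exp_sum G_def fps_of_poly_prod fps_of_poly_power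
        linear_factor prod.distrib)
  also have "\<dots> = fps_of_poly (\<Prod>\<alpha>\<in>A. [:1, F \<alpha> a:] ^ nat (n \<alpha>))"
    by (simp add: G_def fps_Exp_of_int_mult fps_of_poly_prod fps_of_poly_power linear_factor)
  finally show ?thesis .
qed

lemma degree_prod_linear_powers_le:
  "degree (\<Prod>\<alpha>\<in>A. [:1, c \<alpha>:] ^ m \<alpha>) \<le> (\<Sum>\<alpha>\<in>A. m \<alpha>)"
proof (induction A rule: infinite_finite_induct)
  case (insert \<alpha> A)
  have "degree ([:1, c \<alpha>:] ^ m \<alpha>) \<le> m \<alpha>"
    using degree_power_le[of "[:1, c \<alpha>:]" "m \<alpha>"] by (cases "c \<alpha> = 0") auto
  then show ?case
    using insert by (auto intro: order_trans[OF degree_mult_le] add_mono)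
qed simp_all

lemma coeff_0_prod_linear_powers: "coeff (\<Prod>\<alpha>\<in>A. [:1, c \<alpha>:] ^ m \<alpha>) 0 = 1"
  by (simp flip: poly_0_coeff_0 add: poly_prod)

lemma nat_sum_positive_part:
  fixes g :: "'i \<Rightarrow> int"
  assumes "finite A"
  shows "nat (\<Sum>x\<in>{x\<in>A. 0 < g x}. g x) = (\<Sum>x\<in>A. nat (g x))"
proof -
  have "(\<Sum>x\<in>{x\<in>A. 0 < g x}. g x) = int (\<Sum>x\<in>{x\<in>A. 0 < g x}. nat (g x))"
    by (simp add: of_nat_sum)
  also have "\<dots> = int (\<Sum>x\<in>A. nat (g x))"
    using assms by (intro arg_cong[where f = int] sum.mono_neutral_left) auto
  finally show ?thesis
    by (simp only: nat_int)
qed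

lemma sum_eq_nat_positive_minus_negative:
  fixes g :: "'i \<Rightarrow> int"
  shows "(\<Sum>x\<in>A. g x) = int (\<Sum>x\<in>A. nat (g x)) - int (\<Sum>x\<in>A. nat (- g x))"
proof -
  have "(\<Sum>x\<in>A. g x) = (\<Sum>x\<in>A. int (nat (g x)) - int (nat (- g x)))"
    by (intro sum.cong) auto
  then show ?thesis
    by (simp add: of_nat_sum sum_subtractf)
qed

lemma linear_int_combination:
  fixes F :: "'i \<Rightarrow> 'a::real_vector \<Rightarrow> 'b::real_algebra_1"
  assumes "\<And>\<alpha>. \<alpha> \<in> A \<Longrightarrow> linear (F \<alpha>)"
  shows "linear (\<lambda>x. \<Sum>\<alpha>\<in>A. of_int (n \<alpha>) * F \<alpha> x)"
proof (rule linearI)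
  fix x y
  have "F \<alpha> (x + y) = F \<alpha> x + F \<alpha> y" if "\<alpha> \<in> A" for \<alpha>
    using assms[OF that] by (rule linear_add)
  then show "(\<Sum>\<alpha>\<in>A. of_int (n \<alpha>) * F \<alpha> (x + y))
      = (\<Sum>\<alpha>\<in>A. of_int (n \<alpha>) * F \<alpha> x) + (\<Sum>\<alpha>\<in>A. of_int (n \<alpha>) * F \<alpha> y)"
    by (simp add: distrib_left sum.distrib)
next
  fix c x
  have "F \<alpha> (c *\<^sub>R x) = c *\<^sub>R F \<alpha> x" if "\<alpha> \<in> A" for \<alpha>
    using assms[OF that] by (rule linear_scale)
  then show "(\<Sum>\<alpha>\<in>A. of_int (n \<alpha>) * F \<alpha> (c *\<^sub>R x))
      = c *\<^sub>R (\<Sum>\<alpha>\<in>A. of_int (n \<alpha>) * F \<alpha> x)"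
    by (simp add: scaleR_sum_right mult_scaleR_right)
qed

theorem mainTheorem4:
  fixes fs :: "nat \<Rightarrow> 'a::{comm_ring_1,real_algebra_1} \<Rightarrow> 'b::{comm_ring_1,real_algebra_1}"
    and ns :: "nat \<Rightarrow> int" and r :: nat
  assumes "\<And>\<alpha>. \<alpha> < r \<Longrightarrow> unital_alg_hom (fs \<alpha>)"
  defines "f \<equiv> (\<lambda>x. \<Sum>\<alpha><r. of_int (ns \<alpha>) * fs \<alpha> x)"
    and "p \<equiv> nat (\<Sum>\<alpha>\<in>{\<alpha>. \<alpha> < r \<and> ns \<alpha> > 0}. ns \<alpha>)"
    and "q \<equiv> nat (- (\<Sum>\<alpha>\<in>{\<alpha>. \<alpha> < r \<and> ns \<alpha> < 0}. ns \<alpha>))"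
  shows "pq_hom p q f \<and> f 1 = of_int (\<Sum>\<alpha><r. ns \<alpha>) \<and> f 1 = of_int (int p - int q)"
proof -
  have hom: "\<And>\<alpha>. \<alpha> \<in> {..<r} \<Longrightarrow> unital_alg_hom (fs \<alpha>)"
    using assms(1) by simp
  have p: "p = (\<Sum>\<alpha><r. nat (ns \<alpha>))"
    using nat_sum_positive_part[of "{..<r}" ns] by (simp add: p_def conj_commute)
  have q: "q = (\<Sum>\<alpha><r. nat (- ns \<alpha>))"
    using nat_sum_positive_part[of "{..<r}" "\<lambda>\<alpha>. - ns \<alpha>"]
    by (simp add: q_def conj_commute sum_negf)
  have sum_ns: "(\<Sum>\<alpha><r. ns \<alpha>) = int p - int q"
    unfolding p q by (rule sum_eq_nat_positive_minus_negative)
  have f1: "f 1 = of_int (\<Sum>\<alpha><r. ns \<alpha>)"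
    using hom by (simp add: f_def unital_alg_hom_def)
  have "linear f"
    using hom unfolding f_def unital_alg_hom_def by (intro linear_int_combination) simp
  moreover have "\<exists>P Q :: 'b poly. degree P \<le> p \<and> degree Q \<le> q \<and> coeff Q 0 = 1 \<and>
                   char_fun f a * fps_of_poly Q = fps_of_poly P" for a
  proof (intro exI conjI)
    show "char_fun f a * fps_of_poly (\<Prod>\<alpha><r. [:1, fs \<alpha> a:] ^ nat (- ns \<alpha>))
        = fps_of_poly (\<Prod>\<alpha><r. [:1, fs \<alpha> a:] ^ nat (ns \<alpha>))"
      unfolding f_def using hom by (intro char_fun_int_combination) simp_all
  qed (simp_all add: p q degree_prod_linear_powers_le coeff_0_prod_linear_powers)
  ultimately show ?thesis
    using f1 sum_ns by (simp add: pq_hom_def)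
qed

end
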